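(* Let $\varphi\colon\mathcal{A}\to\mathcal{A}^*$ be a substitution of constant length $k$. Then: (1) For any $x,y\in\mathcal{A}^{\mathbf{Z}}$ and $m\geq1$, $\varphi^m(x)=\varphi^m(y)$ if and only if $\Theta(x)=\Theta(y)$ for all $\Theta\in\mathrm{F}_{\varphi,m}$. (2) There exists $n\geq1$ such that $\varphi^n$ is column-constant.
   Context: $\varphi$ has constant length $k\geq2$ and acts on $\mathcal{A}^{\mathbf{Z}}$ by concatenation. For $i\in[0,k-1]$, $\Psi_i\colon\mathcal{A}\to\mathcal{A}$, $a\mapsto\varphi(a)_i$ (the $i$-th letter, indexing from $0$), extended letterwise to $\mathcal{A}^{\mathbf{Z}}$. For $\mathbf{i}=i_0\cdots i_{m-1}\in[0,k-1]^m$, $\Psi_{\mathbf{i}}=\Psi_{i_{m-1}}\circ\cdots\circ\Psi_{i_0}$ (identity if $m=0$), and $\mathrm{F}_{\varphi,m}=\{\Psi_{\mathbf{i}}:\mathbf{i}\in[0,k-1]^m\}$. A substitution $\psi$ of constant length is column-constant if the sets $\mathrm{F}_{\psi,m}$, $m\geq1$, are all equal. *)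

theory Defs
  imports Main
begin

definition const_length :: "('a \<Rightarrow> 'a list) \<Rightarrow> nat \<Rightarrow> bool" where
  "const_length \<phi> k \<longleftrightarrow> (\<forall>a. length (\<phi> a) = k)"

text \<open>Action on A^Z by concatenation: position q*k + r of phi(x) is letter r of phi(x_q).\<close>
definition subst_act :: "('a \<Rightarrow> 'a list) \<Rightarrow> nat \<Rightarrow> (int \<Rightarrow> 'a) \<Rightarrow> (int \<Rightarrow> 'a)" where
  "subst_act \<phi> k x = (\<lambda>n. \<phi> (x (n div int k)) ! nat (n mod int k))"

fun subst_pow :: "('a \<Rightarrow> 'a list) \<Rightarrow> nat \<Rightarrow> 'a \<Rightarrow> 'a list" where
  "subst_pow \<phi> 0 a = [a]"
| "subst_pow \<phi> (Suc n) a = concat (map \<phi> (subst_pow \<phi> n a))"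

definition Psi :: "('a \<Rightarrow> 'a list) \<Rightarrow> nat \<Rightarrow> 'a \<Rightarrow> 'a" where
  "Psi \<phi> i = (\<lambda>a. \<phi> a ! i)"

text \<open>Psi_{i_0...i_{m-1}} = Psi_{i_{m-1}} o ... o Psi_{i_0} (identity for the empty word).\<close>
definition Psi_word :: "('a \<Rightarrow> 'a list) \<Rightarrow> nat list \<Rightarrow> 'a \<Rightarrow> 'a" where
  "Psi_word \<phi> is = fold (\<lambda>i f. Psi \<phi> i \<circ> f) is id"

definition F_set :: "('a \<Rightarrow> 'a list) \<Rightarrow> nat \<Rightarrow> nat \<Rightarrow> ('a \<Rightarrow> 'a) set" where
  "F_set \<phi> k m = {Psi_word \<phi> is | is. length is = m \<and> set is \<subseteq> {0..<k}}"

definition column_constant :: "('a \<Rightarrow> 'a list) \<Rightarrow> nat \<Rightarrow> bool" where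
  "column_constant \<psi> k \<longleftrightarrow> (\<forall>m\<ge>1. \<forall>m'\<ge>1. F_set \<psi> k m = F_set \<psi> k m')"

end

theory Submission
  imports Defs
begin

(* Position q k + i of phi(x) carries Psi_i (x_q), so Theta o phi(x) = Theta o phi(y) iff
   Theta o Psi_i o x = Theta o Psi_i o y for all i < k; peeling off one application of phi
   at a time gives (1).  For (2), the letter maps of phi^n are exactly the maps in F_{phi,n},
   hence F_{phi^n,m} = F_{phi,nm}.  As F_{phi,m+1} is determined by F_{phi,m} and a finite
   alphabet has only finitely many sets of self-maps, the sequence F_{phi,m} is eventually
   periodic; for n a multiple of the period beyond the preperiod, F_{phi,nj} = F_{phi,n} for
   all j >= 1, i.e. phi^n is column-constant. *)

definition set_comp :: "('b \<Rightarrow> 'c) set \<Rightarrow> ('a \<Rightarrow> 'b) set \<Rightarrow> ('a \<Rightarrow> 'c) set" where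
  "set_comp A B = {f \<circ> g | f g. f \<in> A \<and> g \<in> B}"

lemma fold_Psi_comp:
  fixes \<phi> :: "'a \<Rightarrow> 'a list" and h :: "'a \<Rightarrow> 'a"
  shows "fold (\<lambda>i f. Psi \<phi> i \<circ> f) is h = Psi_word \<phi> is \<circ> h"
proof (induction "is" arbitrary: h)
  case Nil
  then show ?case by (simp add: Psi_word_def)
next
  case (Cons i "is")
  have "Psi_word \<phi> (i # is) = fold (\<lambda>i f. Psi \<phi> i \<circ> f) is (Psi \<phi> i)"
    by (simp only: Psi_word_def fold.simps comp_apply comp_id)
  also have "\<dots> = Psi_word \<phi> is \<circ> Psi \<phi> i"
    by (rule Cons.IH)
  finally have Cons_eq: "Psi_word \<phi> (i # is) = Psi_word \<phi> is \<circ> Psi \<phi> i" .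
  have "fold (\<lambda>i f. Psi \<phi> i \<circ> f) (i # is) h = fold (\<lambda>i f. Psi \<phi> i \<circ> f) is (Psi \<phi> i \<circ> h)"
    by (simp only: fold.simps comp_apply)
  also have "\<dots> = Psi_word \<phi> is \<circ> (Psi \<phi> i \<circ> h)"
    by (rule Cons.IH)
  finally show ?case
    by (simp only: Cons_eq comp_assoc)
qed

lemma Psi_word_append: "Psi_word \<phi> (is @ js) = Psi_word \<phi> js \<circ> Psi_word \<phi> is"
proof -
  have "Psi_word \<phi> (is @ js) = fold (\<lambda>i f. Psi \<phi> i \<circ> f) js (Psi_word \<phi> is)"
    by (simp add: Psi_word_def)
  then show ?thesis
    by (simp only: fold_Psi_comp)
qed

lemma F_set_eq_image: "F_set \<phi> k m = Psi_word \<phi> ` {is. length is = m \<and> set is \<subseteq> {0..<k}}"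
  unfolding F_set_def by (rule setcompr_eq_image)

lemma F_set_0: "F_set \<phi> k 0 = {id}"
  by (simp add: F_set_def Psi_word_def)

lemma F_set_1: "F_set \<phi> k 1 = Psi \<phi> ` {..<k}"
proof -
  have "{is. length is = 1 \<and> set is \<subseteq> {0..<k}} = (\<lambda>i. [i]) ` {..<k}"
    by (auto simp: length_Suc_conv)
  then show ?thesis
    by (simp add: F_set_eq_image image_image Psi_word_def)
qed

lemma F_set_add: "F_set \<phi> k (m + n) = set_comp (F_set \<phi> k n) (F_set \<phi> k m)"
proof
  show "F_set \<phi> k (m + n) \<subseteq> set_comp (F_set \<phi> k n) (F_set \<phi> k m)"
  proof
    fix T assume "T \<in> F_set \<phi> k (m + n)"
    then obtain ws where ws: "T = Psi_word \<phi> ws" "length ws = m + n" "set ws \<subseteq> {0..<k}"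
      unfolding F_set_def by blast
    have "T = Psi_word \<phi> (drop m ws) \<circ> Psi_word \<phi> (take m ws)"
      using ws(1) by (simp flip: Psi_word_append)
    moreover have "Psi_word \<phi> (drop m ws) \<in> F_set \<phi> k n" "Psi_word \<phi> (take m ws) \<in> F_set \<phi> k m"
      using ws(2,3) unfolding F_set_eq_image by (auto intro!: imageI dest: in_set_dropD in_set_takeD)
    ultimately show "T \<in> set_comp (F_set \<phi> k n) (F_set \<phi> k m)"
      unfolding set_comp_def by blast
  qed
next
  show "set_comp (F_set \<phi> k n) (F_set \<phi> k m) \<subseteq> F_set \<phi> k (m + n)"
  proof
    fix T assume "T \<in> set_comp (F_set \<phi> k n) (F_set \<phi> k m)"
    then obtain us vs where "T = Psi_word \<phi> (us @ vs)"
      "length us = m" "set us \<subseteq> {0..<k}" "length vs = n" "set vs \<subseteq> {0..<k}"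
      unfolding set_comp_def F_set_def by (auto simp flip: Psi_word_append)
    then show "T \<in> F_set \<phi> k (m + n)"
      unfolding F_set_eq_image by (auto intro!: imageI)
  qed
qed

lemma F_set_Suc: "F_set \<phi> k (Suc m) = set_comp (F_set \<phi> k m) (Psi \<phi> ` {..<k})"
  using F_set_add[of \<phi> k 1 m] F_set_1[of \<phi> k] by simp

lemma Ball_set_comp: "(\<forall>h\<in>set_comp A B. P h) \<longleftrightarrow> (\<forall>f\<in>A. \<forall>g\<in>B. P (f \<circ> g))"
  unfolding set_comp_def by blast

lemma subst_act_at:
  assumes "i < k"
  shows "subst_act \<phi> k x (q * int k + int i) = Psi \<phi> i (x q)"
  using assms by (simp add: subst_act_def Psi_def)

lemma comp_subst_act_eq_iff:
  assumes "k > 0"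
  shows "\<Theta> \<circ> subst_act \<phi> k x = \<Theta> \<circ> subst_act \<phi> k y \<longleftrightarrow>
         (\<forall>i<k. \<Theta> \<circ> Psi \<phi> i \<circ> x = \<Theta> \<circ> Psi \<phi> i \<circ> y)"
proof
  assume eq: "\<Theta> \<circ> subst_act \<phi> k x = \<Theta> \<circ> subst_act \<phi> k y"
  show "\<forall>i<k. \<Theta> \<circ> Psi \<phi> i \<circ> x = \<Theta> \<circ> Psi \<phi> i \<circ> y"
  proof (intro allI impI ext)
    fix i q assume "i < k"
    then show "(\<Theta> \<circ> Psi \<phi> i \<circ> x) q = (\<Theta> \<circ> Psi \<phi> i \<circ> y) q"
      using fun_cong[OF eq, of "q * int k + int i"] by (simp add: subst_act_at)
  qed
next
  assume eq: "\<forall>i<k. \<Theta> \<circ> Psi \<phi> i \<circ> x = \<Theta> \<circ> Psi \<phi> i \<circ> y"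
  show "\<Theta> \<circ> subst_act \<phi> k x = \<Theta> \<circ> subst_act \<phi> k y"
  proof
    fix n
    let ?i = "nat (n mod int k)"
    have "?i < k" using assms by (simp add: nat_less_iff)
    then have "(\<Theta> \<circ> Psi \<phi> ?i \<circ> x) (n div int k) = (\<Theta> \<circ> Psi \<phi> ?i \<circ> y) (n div int k)"
      using eq by simp
    then show "(\<Theta> \<circ> subst_act \<phi> k x) n = (\<Theta> \<circ> subst_act \<phi> k y) n"
      by (simp add: subst_act_def Psi_def)
  qed
qed

lemma funpow_subst_act_eq_iff:
  assumes "k > 0"
  shows "(subst_act \<phi> k ^^ m) x = (subst_act \<phi> k ^^ m) y \<longleftrightarrow>
         (\<forall>\<Theta>\<in>F_set \<phi> k m. \<Theta> \<circ> x = \<Theta> \<circ> y)"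
proof (induction m arbitrary: x y)
  case 0
  then show ?case by (simp add: F_set_0)
next
  case (Suc m)
  let ?\<sigma> = "subst_act \<phi> k"
  have "(?\<sigma> ^^ Suc m) x = (?\<sigma> ^^ Suc m) y \<longleftrightarrow> (?\<sigma> ^^ m) (?\<sigma> x) = (?\<sigma> ^^ m) (?\<sigma> y)"
    by (simp only: funpow_Suc_right comp_apply)
  also have "\<dots> \<longleftrightarrow> (\<forall>\<Theta>\<in>F_set \<phi> k m. \<Theta> \<circ> ?\<sigma> x = \<Theta> \<circ> ?\<sigma> y)"
    by (rule Suc.IH)
  also have "\<dots> \<longleftrightarrow> (\<forall>\<Theta>\<in>F_set \<phi> k m. \<forall>i<k. \<Theta> \<circ> Psi \<phi> i \<circ> x = \<Theta> \<circ> Psi \<phi> i \<circ> y)"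
    by (simp only: comp_subst_act_eq_iff[OF assms])
  also have "\<dots> \<longleftrightarrow> (\<forall>\<Theta>\<in>F_set \<phi> k (Suc m). \<Theta> \<circ> x = \<Theta> \<circ> y)"
    by (auto simp: F_set_Suc Ball_set_comp)
  finally show ?case .
qed

lemma length_subst_pow:
  assumes "const_length \<phi> k"
  shows "length (subst_pow \<phi> n a) = k ^ n"
  using assms by (induction n) (auto simp: const_length_def length_concat comp_def sum_list_triv)

lemma nth_concat_equal_length:
  assumes "\<forall>ys\<in>set yss. length ys = k" "q < length yss" "i < k"
  shows "concat yss ! (q * k + i) = yss ! q ! i"
  using assms
proof (induction yss arbitrary: q)
  case Nil
  then show ?case by simp
next
  case (Cons ys yss)
  then show ?case by (cases q) (auto simp: nth_append add.assoc)
qed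

lemma lessThan_mult_eq_image:
  "{..<m * k} = (\<lambda>(q, i). q * k + i) ` ({..<m} \<times> {..<k})" for m k :: nat
proof (intro equalityI subsetI)
  fix j assume "j \<in> {..<m * k}"
  then have "k > 0" by (cases "k = 0") auto
  with \<open>j \<in> {..<m * k}\<close> have "j div k < m" "j mod k < k" "j = j div k * k + j mod k"
    by (auto simp: less_mult_imp_div_less)
  then show "j \<in> (\<lambda>(q, i). q * k + i) ` ({..<m} \<times> {..<k})"
    by force
next
  fix j assume "j \<in> (\<lambda>(q, i). q * k + i) ` ({..<m} \<times> {..<k})"
  then obtain q i where "j = q * k + i" "q < m" "i < k" by auto
  then have "j < Suc q * k" by simp
  also have "\<dots> \<le> m * k" using \<open>q < m\<close> by (intro mult_right_mono) auto
  finally show "j \<in> {..<m * k}" by simp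
qed

lemma Psi_subst_pow_Suc:
  assumes "const_length \<phi> k" "q < k ^ n" "i < k"
  shows "Psi (subst_pow \<phi> (Suc n)) (q * k + i) = Psi \<phi> i \<circ> Psi (subst_pow \<phi> n) q"
  using assms
  by (simp add: fun_eq_iff Psi_def nth_concat_equal_length length_subst_pow const_length_def)

lemma Psi_subst_pow_image:
  assumes "const_length \<phi> k"
  shows "Psi (subst_pow \<phi> n) ` {..<k ^ n} = F_set \<phi> k n"
proof (induction n)
  case 0
  show ?case by (simp add: F_set_0 Psi_def lessThan_Suc id_def)
next
  case (Suc n)
  have "Psi (subst_pow \<phi> (Suc n)) ` {..<k ^ Suc n}
      = (\<lambda>(q, i). Psi \<phi> i \<circ> Psi (subst_pow \<phi> n) q) ` ({..<k ^ n} \<times> {..<k})"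
    unfolding power_Suc2 lessThan_mult_eq_image image_image
    using Psi_subst_pow_Suc[OF assms] by (intro image_cong) auto
  also have "\<dots> = set_comp (F_set \<phi> k 1) (F_set \<phi> k n)"
    unfolding F_set_1 Suc.IH[symmetric] set_comp_def by auto
  also have "\<dots> = F_set \<phi> k (Suc n)"
    using F_set_add[of \<phi> k n 1] by simp
  finally show ?case .
qed

lemma F_set_subst_pow:
  assumes "const_length \<phi> k"
  shows "F_set (subst_pow \<phi> n) (k ^ n) m = F_set \<phi> k (n * m)"
proof (induction m)
  case 0
  show ?case by (simp add: F_set_0)
next
  case (Suc m)
  have "F_set (subst_pow \<phi> n) (k ^ n) (Suc m) = set_comp (F_set \<phi> k (n * m)) (F_set \<phi> k n)"
    by (simp add: F_set_Suc Suc.IH Psi_subst_pow_image[OF assms])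
  also have "\<dots> = F_set \<phi> k (n * Suc m)"
    using F_set_add[of \<phi> k n "n * m"] by simp
  finally show ?case .
qed

lemma finite_iteration_idempotent_index:
  fixes f :: "nat \<Rightarrow> 'b"
  assumes "finite (range f)" and step: "\<And>m. f (Suc m) = G (f m)"
  shows "\<exists>n\<ge>1. \<forall>j\<ge>1. f (n * j) = f n"
proof -
  have "\<not> inj f"
    using assms(1) finite_imageD infinite_UNIV_nat by blast
  then obtain a b where "a < b" "f a = f b"
    unfolding inj_def by (metis linorder_neqE_nat)
  define p where "p = b - a"
  have "p > 0" using \<open>a < b\<close> by (simp add: p_def)
  have shift: "f (a + p + t) = f (a + t)" for t
    by (induction t) (use \<open>a < b\<close> \<open>f a = f b\<close> in \<open>simp_all add: p_def step\<close>)
  have periodic: "f (t + j * p) = f t" if "a \<le> t" for t j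
  proof (induction j)
    case 0
    then show ?case by simp
  next
    case (Suc j)
    have "f (t + Suc j * p) = f (a + p + (t - a + j * p))"
      using \<open>a \<le> t\<close> by (simp add: algebra_simps)
    also have "\<dots> = f (a + (t - a + j * p))"
      by (rule shift)
    also have "\<dots> = f (t + j * p)"
      using \<open>a \<le> t\<close> by simp
    finally show ?case using Suc.IH by simp
  qed
  define n where "n = Suc a * p"
  have "Suc a * 1 \<le> Suc a * p"
    using \<open>p > 0\<close> by (intro mult_le_mono2) simp
  then have "a \<le> n" "1 \<le> n"
    by (simp_all add: n_def)
  moreover have "f (n * j) = f n" if "j \<ge> 1" for j
  proof -
    have "n * j = n + (Suc a * (j - 1)) * p"
      using that by (simp add: n_def algebra_simps flip: mult_Suc_right)
    then show ?thesis using periodic[OF \<open>a \<le> n\<close>] by simp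
  qed
  ultimately show ?thesis by blast
qed

theorem lemma3p8:
  fixes \<phi> :: "'a::finite \<Rightarrow> 'a list" and k :: nat
  assumes "k \<ge> 2" and "const_length \<phi> k"
  shows "(\<forall>(x::int \<Rightarrow> 'a) y m. m \<ge> 1 \<longrightarrow>
            (((subst_act \<phi> k) ^^ m) x = ((subst_act \<phi> k) ^^ m) y
             \<longleftrightarrow> (\<forall>\<Theta>\<in>F_set \<phi> k m. \<Theta> \<circ> x = \<Theta> \<circ> y)))
       \<and> (\<exists>n\<ge>1. column_constant (subst_pow \<phi> n) (k ^ n))"
proof
  have "k > 0" using assms(1) by simp
  then show "\<forall>(x::int \<Rightarrow> 'a) y m. m \<ge> 1 \<longrightarrow>
            (((subst_act \<phi> k) ^^ m) x = ((subst_act \<phi> k) ^^ m) y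
             \<longleftrightarrow> (\<forall>\<Theta>\<in>F_set \<phi> k m. \<Theta> \<circ> x = \<Theta> \<circ> y))"
    using funpow_subst_act_eq_iff by blast
next
  have "finite (range (F_set \<phi> k))" by simp
  from finite_iteration_idempotent_index[where G = "\<lambda>X. set_comp X (Psi \<phi> ` {..<k})",
      OF this F_set_Suc]
  obtain n where "n \<ge> 1" and "\<forall>j\<ge>1. F_set \<phi> k (n * j) = F_set \<phi> k n"
    by blast
  then have "column_constant (subst_pow \<phi> n) (k ^ n)"
    unfolding column_constant_def F_set_subst_pow[OF assms(2)] by simp
  with \<open>n \<ge> 1\<close> show "\<exists>n\<ge>1. column_constant (subst_pow \<phi> n) (k ^ n)" by blast
qed

end
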